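(* The $\mathcal{P}_+$-coadjoint orbit through $dT$ coincides with the affine subspace $dT+\mathfrak{U}_-^*\subset\mathfrak{b}_k^*$.
   Context: Let $\mathfrak{g}=\mathfrak{gl}_n(\mathbb{C})$, $\mathfrak{t}$ a Cartan subalgebra, $k>1$, $T=\sum_{i=1}^{k-1}T_iz^{-i}$, $T_i\in\mathfrak{t}$, $T_{k-1}\ne0$, $dT=\sum_i(-iT_i)z^{-i-1}dz$. $B_k=\{\sum_{i=0}^{k-1}b_iz^i:b_0=1,b_i\in\mathfrak{g}\}\subset\mathrm{GL}_n(\mathbb{C}[z]/(z^k))$; $\mathfrak{b}_k^*=\{\sum_{i=1}^{k-1}X_iz^{-i-1}dz:X_i\in\mathfrak{g}\}$ via $\mathrm{res}_{z=0}\mathrm{tr}$; coadjoint action $\mathrm{Ad}^*_bB$ = part of $bBb^{-1}$ in degrees $z^{-i-1}dz$, $1\le i\le k-1$. For $i=0,\dots,k-2$, $\mathbb{C}^n=\bigoplus_{p\in J_i}V^{(i)}_p$ is the decomposition into simultaneous eigenspaces of $(T_{i+1},\dots,T_{k-1})$, $\pi_i:J_j\to J_i$ natural; total orders on the $J_i$ fixed with $\pi_{i+1}(p)<\pi_{i+1}(q)\Rightarrow p<q$. $\mathfrak{p}_i^+=\bigoplus_{p\ge q}\mathrm{Hom}(V^{(i)}_p,V^{(i)}_q)$, $\mathfrak{u}_i^+=\bigoplus_{p>q}\mathrm{Hom}(V^{(i)}_p,V^{(i)}_q)$, $\mathfrak{p}^+_{k-1}=\mathfrak{g}$, $\mathfrak{u}^+_{k-1}=0$.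 $\mathcal{P}_+=\{b\in B_k:b_i\in\mathfrak{p}_i^+\ (1\le i\le k-1)\}$ (a subgroup), $\mathfrak{U}_-^*=\{\sum_{i=1}^{k-1}X_iz^{-i-1}dz:X_i\in\mathfrak{u}_i^+\}$. *)

theory Defs
  imports "HOL-Analysis.Analysis"
begin

text \<open>n x n complex matrices, indexed by a finite type 'n (so n = CARD('n)).
  An element of the truncated polynomial ring gl_n(C[z]/(z^k)) is a coefficient
  sequence nat => matrix, normalised to vanish in degrees >= k.
  An element sum_{i=1}^{k-1} X_i z^{-i-1} dz of b_k^* is a sequence X with
  X 0 = 0 and X i = 0 for i >= k.\<close>

type_synonym 'n cmat = "complex ^ 'n ^ 'n"

text \<open>Inverse in C[z]/(z^k) of b with b 0 = 1 (coefficients; truncation applied later).\<close>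
fun tinv :: "(nat \<Rightarrow> 'n::finite cmat) \<Rightarrow> nat \<Rightarrow> 'n cmat" where
  "tinv b 0 = mat 1"
| "tinv b (Suc m) = - (\<Sum>a\<in>{..m}. b (Suc a) ** tinv b (m - a))"

definition in_Bk :: "nat \<Rightarrow> (nat \<Rightarrow> 'n::finite cmat) \<Rightarrow> bool" where
  "in_Bk k b \<longleftrightarrow> b 0 = mat 1 \<and> (\<forall>i\<ge>k. b i = 0)"

definition in_bkdual :: "nat \<Rightarrow> (nat \<Rightarrow> 'n::finite cmat) \<Rightarrow> bool" where
  "in_bkdual k X \<longleftrightarrow> X 0 = 0 \<and> (\<forall>i\<ge>k. X i = 0)"

text \<open>Coadjoint action: the z^{-j-1}dz part (1 <= j <= k-1) of b B b^{-1}.\<close>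
definition coad :: "nat \<Rightarrow> (nat \<Rightarrow> 'n::finite cmat) \<Rightarrow> (nat \<Rightarrow> 'n cmat) \<Rightarrow> nat \<Rightarrow> 'n cmat" where
  "coad k b X = (\<lambda>j. if 1 \<le> j \<and> j < k then
      (\<Sum>i\<in>{j..<k}. \<Sum>a\<in>{..i - j}. b a ** X i ** tinv b (i - j - a)) else 0)"

definition diag_mat :: "'n::finite cmat \<Rightarrow> bool" where
  "diag_mat A \<longleftrightarrow> (\<forall>a b. a \<noteq> b \<longrightarrow> A $ a $ b = 0)"

definition dT :: "nat \<Rightarrow> (nat \<Rightarrow> 'n::finite cmat) \<Rightarrow> nat \<Rightarrow> 'n cmat" where
  "dT k T = (\<lambda>i. if 1 \<le> i \<and> i < k then - (of_nat i) *\<^sub>R T i else 0)"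

text \<open>Basis indices a, b lie in the same simultaneous eigenspace V^{(i)}_p of
  (T_{i+1},...,T_{k-1}) (T diagonal).\<close>
definition same_eig :: "nat \<Rightarrow> (nat \<Rightarrow> 'n::finite cmat) \<Rightarrow> nat \<Rightarrow> 'n \<Rightarrow> 'n \<Rightarrow> bool" where
  "same_eig k T i a b \<longleftrightarrow> (\<forall>j. i < j \<and> j < k \<longrightarrow> T j $ a $ a = T j $ b $ b)"

text \<open>A total order on J_i is encoded as a total preorder ord i on basis indices whose
  indifference classes are exactly the eigenspace classes: ord i a b means
  class(a) <= class(b) in J_i.\<close>
definition admissible_orders ::
  "nat \<Rightarrow> (nat \<Rightarrow> 'n::finite cmat) \<Rightarrow> (nat \<Rightarrow> 'n \<Rightarrow> 'n \<Rightarrow> bool) \<Rightarrow> bool" where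
  "admissible_orders k T ord \<longleftrightarrow>
     (\<forall>i. i \<le> k - 2 \<longrightarrow>
        (\<forall>a b c. ord i a b \<longrightarrow> ord i b c \<longrightarrow> ord i a c) \<and>
        (\<forall>a b. ord i a b \<or> ord i b a) \<and>
        (\<forall>a b. (ord i a b \<and> ord i b a) \<longleftrightarrow> same_eig k T i a b)) \<and>
     (\<forall>i a b. i + 1 \<le> k - 2 \<longrightarrow>
        (ord (i+1) a b \<and> \<not> ord (i+1) b a) \<longrightarrow> (ord i a b \<and> \<not> ord i b a))"

text \<open>p_i^+ = sum_{p>=q} Hom(V_p,V_q); entry X$a$b maps e_b to e_a.\<close>
definition in_p_plus :: "nat \<Rightarrow> (nat \<Rightarrow> 'n::finite \<Rightarrow> 'n \<Rightarrow> bool) \<Rightarrow> nat \<Rightarrow> 'n cmat \<Rightarrow> bool" where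
  "in_p_plus k ord i X \<longleftrightarrow> (k - 1 \<le> i \<or> (\<forall>a b. X $ a $ b \<noteq> 0 \<longrightarrow> ord i a b))"

definition in_u_plus :: "nat \<Rightarrow> (nat \<Rightarrow> 'n::finite \<Rightarrow> 'n \<Rightarrow> bool) \<Rightarrow> nat \<Rightarrow> 'n cmat \<Rightarrow> bool" where
  "in_u_plus k ord i X \<longleftrightarrow> (if k - 1 \<le> i then X = 0
      else (\<forall>a b. X $ a $ b \<noteq> 0 \<longrightarrow> ord i a b \<and> \<not> ord i b a))"

definition P_plus :: "nat \<Rightarrow> (nat \<Rightarrow> 'n::finite \<Rightarrow> 'n \<Rightarrow> bool) \<Rightarrow> (nat \<Rightarrow> 'n cmat) set" where
  "P_plus k ord = {b. in_Bk k b \<and> (\<forall>i. 1 \<le> i \<and> i \<le> k - 1 \<longrightarrow> in_p_plus k ord i (b i))}"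

definition U_minus_dual :: "nat \<Rightarrow> (nat \<Rightarrow> 'n::finite \<Rightarrow> 'n \<Rightarrow> bool) \<Rightarrow> (nat \<Rightarrow> 'n cmat) set" where
  "U_minus_dual k ord = {X. in_bkdual k X \<and> (\<forall>i. 1 \<le> i \<and> i \<le> k - 1 \<longrightarrow> in_u_plus k ord i (X i))}"

end

theory Submission
  imports Defs
begin

text \<open>Write \<open>X = dT\<close>. For \<open>b \<in> P\<^sub>+\<close> the coefficients of \<open>b\<close> and \<open>b\<^sup>-\<^sup>1\<close> are block upper
  triangular, so \<open>b X b\<^sup>-\<^sup>1 - X\<close> is a sum of terms \<open>[b\<^sub>a, X\<^sub>i] b\<^sup>-\<^sup>1\<^sub>c\<close> with \<open>a \<ge> 1\<close>; as \<open>X\<^sub>i\<close> is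
  diagonal, \<open>[b\<^sub>a, X\<^sub>i]\<close> lives strictly above the diagonal blocks at level \<open>i - 1 \<ge> j\<close>, i.e. in
  \<open>u\<^sub>j\<^sup>+\<close>. Conversely, \<open>Ad\<^sup>*\<^sub>b X = X + U\<close> follows from the intertwining relation \<open>b X = (X + U) b\<close>
  in the relevant degrees. Read entrywise, one column \<open>q\<close> at a time, this is a square linear
  system for the strictly block-upper entries \<open>(b\<^sub>a)\<^sub>p\<^sub>q\<close>. It is triangular, and its diagonal
  coefficients are differences of the eigenvalues at \<open>p\<close> and \<open>q\<close> of \<open>T\<^sub>D\<close>, where \<open>D\<close> is the
  first level at which \<open>p\<close> and \<open>q\<close> lie in the same block; by the choice of \<open>D\<close> these are
  nonzero.\<close>

lemma sum_matrix_mult: "(\<Sum>x\<in>S. f x) ** (B::'n::finite cmat) = (\<Sum>x\<in>S. f x ** B)"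
  by (simp add: vec_eq_iff matrix_matrix_mult_def sum_distrib_right sum_component sum.swap[of _ S])

lemma matrix_mult_sum: "(B::'n::finite cmat) ** (\<Sum>x\<in>S. f x) = (\<Sum>x\<in>S. B ** f x)"
  by (simp add: vec_eq_iff matrix_matrix_mult_def sum_distrib_left sum_component sum.swap[of _ S])

lemma matrix_diff_rdistrib: "((A::'n::finite cmat) - B) ** C = A ** C - B ** C"
  by (simp add: vec_eq_iff matrix_matrix_mult_def algebra_simps sum_subtractf)

lemma matrix_add_rdistrib: "((A::'n::finite cmat) + B) ** C = A ** C + B ** C"
  by (simp add: vec_eq_iff matrix_matrix_mult_def algebra_simps sum.distrib)

lemma tinv_right_inverse:
  assumes "b 0 = mat 1"
  shows "(\<Sum>a\<le>m. b a ** tinv b (m - a)) = (if m = 0 then mat 1 else (0::'n::finite cmat))"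
proof (cases m)
  case 0
  then show ?thesis using assms by simp
next
  case (Suc n)
  have "(\<Sum>a\<le>Suc n. b a ** tinv b (Suc n - a))
      = b 0 ** tinv b (Suc n) + (\<Sum>a\<le>n. b (Suc a) ** tinv b (n - a))"
    by (subst sum.atMost_Suc_shift) simp
  also have "\<dots> = 0" using assms by simp
  finally show ?thesis using Suc by simp
qed

lemma sum_antidiagonals_eq_sum_square:
  fixes F :: "nat \<Rightarrow> nat \<Rightarrow> 'a::comm_monoid_add"
  assumes vanish: "\<And>a c. j + a + c \<ge> k \<Longrightarrow> F a c = 0"
  shows "(\<Sum>m<k - j. \<Sum>a\<le>m. F a (m - a)) = (\<Sum>c<k. \<Sum>a<k. F a c)"
proof -
  have "(\<Sum>m<k - j. \<Sum>a\<le>m. F a (m - a)) = (\<Sum>(a,c)\<in>{(a,c). a + c < k - j}. F a c)"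
    by (rule sum.triangle_reindex[symmetric])
  also have "\<dots> = (\<Sum>(a,c)\<in>{..<k} \<times> {..<k}. F a c)"
  proof (rule sum.mono_neutral_left)
    have "a + c < k - j" if "F a c \<noteq> 0" for a c
      using vanish[of a c] that by linarith
    then show "\<forall>i\<in>{..<k} \<times> {..<k} - {(a,c). a + c < k - j}. (case i of (a,c) \<Rightarrow> F a c) = 0"
      by fastforce
  qed auto
  also have "\<dots> = (\<Sum>a<k. \<Sum>c<k. F a c)"
    by (simp add: sum.cartesian_product)
  also have "\<dots> = (\<Sum>c<k. \<Sum>a<k. F a c)"
    by (rule sum.swap)
  finally show ?thesis .
qed

lemma coad_reindex:
  assumes "1 \<le> j" "j < k"
  shows "coad k b X j = (\<Sum>m<k - j. \<Sum>a\<le>m. b a ** X (j + m) ** tinv b (m - a))"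
proof -
  have "{j..<k} = (\<lambda>m. m + j) ` {0..<k - j}"
    using assms by (auto simp: image_iff intro!: exI[of _ "x - j" for x])
  then show ?thesis
    using assms by (simp add: coad_def sum.reindex inj_on_def add.commute atLeast0LessThan)
qed

text \<open>Multiplying the relation \<open>b X = Y b\<close> by \<open>b\<^sup>-\<^sup>1\<close> on the right; only the degrees
  \<open>j + a + c < k\<close> matter, which is why \<open>X\<close> and \<open>Y\<close> must vanish from degree \<open>k\<close> on.\<close>
lemma coad_eq_if_intertwines:
  fixes b X Y :: "nat \<Rightarrow> 'n::finite cmat"
  assumes b0: "b 0 = mat 1"
    and X: "\<And>i. i \<ge> k \<Longrightarrow> X i = 0" and Y: "\<And>i. i \<ge> k \<Longrightarrow> Y i = 0" "Y 0 = 0"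
    and intertwines: "\<And>j. j \<ge> 1 \<Longrightarrow> (\<Sum>a<k. b a ** X (j + a)) = (\<Sum>a<k. Y (j + a) ** b a)"
  shows "coad k b X = Y"
proof
  fix j
  show "coad k b X j = Y j"
  proof (cases "1 \<le> j \<and> j < k")
    case False
    then show ?thesis using Y by (auto simp: coad_def not_le)
  next
    case True
    then have j: "1 \<le> j" "j < k" by auto
    have "coad k b X j = (\<Sum>m<k - j. \<Sum>a\<le>m. b a ** X (j + a + (m - a)) ** tinv b (m - a))"
      using j by (simp add: coad_reindex)
    also have "\<dots> = (\<Sum>c<k. (\<Sum>a<k. b a ** X (j + c + a)) ** tinv b c)"
      by (subst sum_antidiagonals_eq_sum_square) (use X in \<open>auto simp: sum_matrix_mult add_ac\<close>)
    also have "\<dots> = (\<Sum>c<k. (\<Sum>a<k. Y (j + c + a) ** b a) ** tinv b c)"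
      using j by (simp add: intertwines)
    also have "\<dots> = (\<Sum>m<k - j. \<Sum>a\<le>m. Y (j + a + (m - a)) ** b a ** tinv b (m - a))"
      by (subst sum_antidiagonals_eq_sum_square) (use Y in \<open>auto simp: sum_matrix_mult add_ac\<close>)
    also have "\<dots> = (\<Sum>m<k - j. Y (j + m) ** (\<Sum>a\<le>m. b a ** tinv b (m - a)))"
      by (simp add: matrix_mult_sum matrix_mul_assoc)
    also have "\<dots> = Y j"
      using j by (simp add: tinv_right_inverse[where b=b, OF b0] if_distrib cong: if_cong)
    finally show ?thesis .
  qed
qed

definition support_in :: "('n \<Rightarrow> 'n \<Rightarrow> bool) \<Rightarrow> 'n::finite cmat \<Rightarrow> bool" where
  "support_in R M \<longleftrightarrow> (\<forall>p q. M $ p $ q \<noteq> 0 \<longrightarrow> R p q)"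

lemma support_in_zero [simp]: "support_in R 0"
  by (simp add: support_in_def)

lemma support_in_mono: "support_in R M \<Longrightarrow> (\<And>p q. R p q \<Longrightarrow> R' p q) \<Longrightarrow> support_in R' M"
  by (auto simp: support_in_def)

lemma support_in_sum:
  assumes "\<And>x. x \<in> S \<Longrightarrow> support_in R (f x)"
  shows "support_in R (\<Sum>x\<in>S. f x)"
  unfolding support_in_def
proof (intro allI impI)
  fix p q
  assume "(\<Sum>x\<in>S. f x) $ p $ q \<noteq> 0"
  then obtain x where "x \<in> S" "f x $ p $ q \<noteq> 0"
    by (metis (mono_tags, lifting) sum.neutral sum_component)
  then show "R p q" using assms by (auto simp: support_in_def)
qed

lemma support_in_mult:
  assumes "support_in R1 A" "support_in R2 B" "\<And>p r q. R1 p r \<Longrightarrow> R2 r q \<Longrightarrow> R p q"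
  shows "support_in R (A ** B)"
  unfolding support_in_def
proof (intro allI impI)
  fix p q
  assume "(A ** B) $ p $ q \<noteq> 0"
  then obtain r where "A $ p $ r * B $ r $ q \<noteq> 0"
    by (metis (mono_tags, lifting) matrix_matrix_mult_def sum.neutral vec_lambda_beta)
  then have "A $ p $ r \<noteq> 0" "B $ r $ q \<noteq> 0" by auto
  then show "R p q" using assms(3) assms(1,2)[unfolded support_in_def] by blast
qed

lemma triangular_system_solvable:
  fixes c :: "'i \<Rightarrow> 'i \<Rightarrow> 'a::field" and rank :: "'i \<Rightarrow> nat"
  assumes fin: "finite I" and diag: "\<And>i. i \<in> I \<Longrightarrow> c i i \<noteq> 0"
    and triangular: "\<And>i i'. i \<in> I \<Longrightarrow> i' \<in> I \<Longrightarrow> i' \<noteq> i \<Longrightarrow> c i i' \<noteq> 0 \<Longrightarrow> rank i' < rank i"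
  shows "\<exists>v. \<forall>i\<in>I. (\<Sum>i'\<in>I. c i i' * v i') = g i"
proof -
  have "\<exists>v. \<forall>i\<in>I. rank i < n \<longrightarrow> (\<Sum>i'\<in>I. c i i' * v i') = g i" for n
  proof (induction n)
    case 0
    then show ?case by simp
  next
    case (Suc n)
    then obtain v where v: "\<forall>i\<in>I. rank i < n \<longrightarrow> (\<Sum>i'\<in>I. c i i' * v i') = g i" by blast
    define v' where
      "v' i = (if rank i = n then (g i - (\<Sum>i'\<in>I - {i}. c i i' * v i')) / c i i else v i)" for i
    have off_diag: "(\<Sum>i'\<in>I - {i}. c i i' * v' i') = (\<Sum>i'\<in>I - {i}. c i i' * v i')"
      if "i \<in> I" "rank i \<le> n" for i
    proof (rule sum.cong)
      fix i' assume "i' \<in> I - {i}"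
      then show "c i i' * v' i' = c i i' * v i'"
        using triangular[of i i'] that by (cases "c i i' = 0") (auto simp: v'_def)
    qed simp
    have split: "(\<Sum>i'\<in>I. c i i' * w i') = c i i * w i + (\<Sum>i'\<in>I - {i}. c i i' * w i')"
      if "i \<in> I" for i w
      using fin that by (simp add: sum.remove)
    show ?case
    proof (intro exI ballI impI)
      fix i assume i: "i \<in> I" "rank i < Suc n"
      show "(\<Sum>i'\<in>I. c i i' * v' i') = g i"
      proof (cases "rank i = n")
        case True
        then show ?thesis using diag[OF i(1)] split[OF i(1)] off_diag[OF i(1)] by (simp add: v'_def)
      next
        case False
        then have "v' i = v i" by (simp add: v'_def)
        then have "(\<Sum>i'\<in>I. c i i' * v' i') = c i i * v i + (\<Sum>i'\<in>I - {i}. c i i' * v i')"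
          using split[OF i(1), of v'] off_diag[OF i(1)] i by simp
        also have "\<dots> = (\<Sum>i'\<in>I. c i i' * v i')" using split[OF i(1), of v] by simp
        also have "\<dots> = g i" using v i False by simp
        finally show ?thesis .
      qed
    qed
  qed
  then obtain v where v: "\<forall>i\<in>I. rank i < Suc (\<Sum>i\<in>I. rank i) \<longrightarrow> (\<Sum>i'\<in>I. c i i' * v i') = g i"
    by blast
  have "rank i < Suc (\<Sum>i\<in>I. rank i)" if "i \<in> I" for i
    using member_le_sum[OF that _ fin, of rank] by simp
  then show ?thesis using v by blast
qed

text \<open>\<open>ord_less k ord t p q\<close>: at level \<open>t\<close> the eigenspace block of \<open>p\<close> strictly precedes that
  of \<open>q\<close>, so that \<open>u\<^sub>t\<^sup>+\<close> consists of the matrices supported in \<open>ord_less k ord t\<close>; the bound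
  \<open>t \<le> k - 2\<close> makes this relation empty at the levels where \<open>u\<^sub>t\<^sup>+ = 0\<close>.\<close>
definition ord_less :: "nat \<Rightarrow> (nat \<Rightarrow> 'n \<Rightarrow> 'n \<Rightarrow> bool) \<Rightarrow> nat \<Rightarrow> 'n \<Rightarrow> 'n \<Rightarrow> bool" where
  "ord_less k ord t p q \<longleftrightarrow> t \<le> k - 2 \<and> ord t p q \<and> \<not> ord t q p"

lemma ord_less_irrefl: "\<not> ord_less k ord t p p"
  by (simp add: ord_less_def)

lemma dT_entry:
  "dT k T t $ p $ q = (if 1 \<le> t \<and> t < k then - of_nat t * T t $ p $ q else 0)"
  by (simp add: dT_def vector_scaleR_component scaleR_conv_of_real[where 'a=complex])

context
  fixes k :: nat and T :: "nat \<Rightarrow> 'n::finite cmat" and ord :: "nat \<Rightarrow> 'n \<Rightarrow> 'n \<Rightarrow> bool"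
  assumes k_gt_1: "k > 1"
    and diag_T: "\<forall>i. 1 \<le> i \<and> i \<le> k - 1 \<longrightarrow> diag_mat (T i)"
    and admissible: "admissible_orders k T ord"
begin

lemma ord_preorder_level:
  assumes "t \<le> k - 2"
  shows "ord t p r \<Longrightarrow> ord t r q \<Longrightarrow> ord t p q"
    and "ord t p q \<or> ord t q p"
    and "ord t p q \<and> ord t q p \<longleftrightarrow> same_eig k T t p q"
proof -
  have "(\<forall>a b c. ord t a b \<longrightarrow> ord t b c \<longrightarrow> ord t a c) \<and> (\<forall>a b. ord t a b \<or> ord t b a) \<and>
      (\<forall>a b. (ord t a b \<and> ord t b a) \<longleftrightarrow> same_eig k T t a b)"
    using spec[OF conjunct1[OF admissible[unfolded admissible_orders_def]], of t] assms by (rule mp)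
  then show "ord t p r \<Longrightarrow> ord t r q \<Longrightarrow> ord t p q" "ord t p q \<or> ord t q p"
      "ord t p q \<and> ord t q p \<longleftrightarrow> same_eig k T t p q"
    by blast+
qed

lemma ord_refl: "t \<le> k - 2 \<Longrightarrow> ord t p p"
  using ord_preorder_level(2) by blast

lemma ord_less_Suc_level:
  assumes "ord_less k ord (Suc t) p q"
  shows "ord_less k ord t p q"
proof -
  have "t + 1 \<le> k - 2 \<longrightarrow> ord (t + 1) p q \<and> \<not> ord (t + 1) q p \<longrightarrow> ord t p q \<and> \<not> ord t q p"
    using conjunct2[OF admissible[unfolded admissible_orders_def]] by blast
  then show ?thesis using assms by (simp add: ord_less_def)
qed

lemma ord_less_antimono_level: "t \<le> t' \<Longrightarrow> ord_less k ord t' p q \<Longrightarrow> ord_less k ord t p q"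
  by (induction t' rule: dec_induct) (auto intro: ord_less_Suc_level)

lemma ord_mono_level:
  assumes "t \<le> t'" "t' \<le> k - 2" "ord t p q"
  shows "ord t' p q"
proof (rule ccontr)
  assume "\<not> ord t' p q"
  then have "ord_less k ord t' q p"
    using ord_preorder_level(2)[OF assms(2), of p q] assms(2) by (simp add: ord_less_def)
  then show False
    using ord_less_antimono_level[OF assms(1)] assms(3) by (simp add: ord_less_def)
qed

lemma ord_less_ord_trans: "ord_less k ord t p r \<Longrightarrow> ord t r q \<Longrightarrow> ord_less k ord t p q"
  unfolding ord_less_def using ord_preorder_level(1) by blast

lemma ord_ord_less_trans: "ord t p r \<Longrightarrow> ord_less k ord t r q \<Longrightarrow> ord_less k ord t p q"
  unfolding ord_less_def using ord_preorder_level(1) by blast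

lemma dT_off_diagonal: "p \<noteq> q \<Longrightarrow> dT k T t $ p $ q = 0"
  using diag_T by (auto simp: dT_entry diag_mat_def)

lemma matrix_mult_dT_entry: "(A ** dT k T t) $ p $ q = A $ p $ q * dT k T t $ q $ q"
  unfolding matrix_matrix_mult_def
  by (simp add: sum.remove[of UNIV q] dT_off_diagonal)

lemma dT_matrix_mult_entry: "(dT k T t ** A) $ p $ q = dT k T t $ p $ p * A $ p $ q"
  unfolding matrix_matrix_mult_def
  by (simp add: sum.remove[of UNIV p] dT_off_diagonal)

lemma dT_diag_eq_if_same_eig: "same_eig k T s p q \<Longrightarrow> s < t \<Longrightarrow> dT k T t $ p $ p = dT k T t $ q $ q"
  by (auto simp: dT_entry same_eig_def)

lemma P_plus_support:
  "b \<in> P_plus k ord \<Longrightarrow> 1 \<le> a \<Longrightarrow> a \<le> k - 2 \<Longrightarrow> support_in (ord a) (b a)"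
  unfolding P_plus_def in_p_plus_def support_in_def by auto

lemma tinv_support:
  assumes b: "b \<in> P_plus k ord"
  shows "c \<le> k - 2 \<Longrightarrow> support_in (ord c) (tinv b c)"
proof (induction c rule: less_induct)
  case (less c)
  show ?case
  proof (cases c)
    case 0
    then show ?thesis using less ord_refl by (auto simp: support_in_def mat_def)
  next
    case (Suc n)
    have "support_in (ord c) (b (Suc a) ** tinv b (n - a))" if a: "a \<le> n" for a
    proof (rule support_in_mult)
      show "support_in (ord (Suc a)) (b (Suc a))"
        using P_plus_support[OF b] a Suc less.prems by simp
      show "support_in (ord (n - a)) (tinv b (n - a))"
        using less.IH[of "n - a"] Suc less.prems by simp
      show "ord c p q" if "ord (Suc a) p r" "ord (n - a) r q" for p r q
      proof -
        have "ord c p r" using ord_mono_level[of "Suc a" c p r] that(1) a Suc less.prems by simp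
        moreover have "ord c r q" using ord_mono_level[of "n - a" c r q] that(2) Suc less.prems by simp
        ultimately
        show ?thesis using ord_preorder_level(1)[OF less.prems] by blast
      qed
    qed
    then have "support_in (ord c) (\<Sum>a\<le>n. b (Suc a) ** tinv b (n - a))"
      by (intro support_in_sum) simp
    then show ?thesis using Suc by (simp add: support_in_def)
  qed
qed

lemma in_u_plus_if_support:
  assumes "support_in (ord_less k ord j) M"
  shows "in_u_plus k ord j M"
proof (cases "k - 1 \<le> j")
  case True
  then have "\<not> j \<le> k - 2" using k_gt_1 by arith
  then have "M = 0" using assms by (auto simp: support_in_def ord_less_def vec_eq_iff)
  then show ?thesis using True by (simp add: in_u_plus_def)
next
  case False
  then show ?thesis using assms by (auto simp: support_in_def ord_less_def in_u_plus_def)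
qed

lemma coad_dT_minus_dT_support:
  assumes b: "b \<in> P_plus k ord" and j: "1 \<le> j" "j \<le> k - 1"
  shows "support_in (ord_less k ord j) (coad k b (dT k T) j - dT k T j)"
proof -
  let ?X = "dT k T"
  let ?C = "\<lambda>a m. b a ** ?X (j + m) - ?X (j + m) ** b a"
  have b0: "b 0 = mat 1" using b by (simp add: P_plus_def in_Bk_def)
  have "coad k b ?X j = (\<Sum>m<k - j. \<Sum>a\<le>m. b a ** ?X (j + m) ** tinv b (m - a))"
    using j k_gt_1 by (simp add: coad_reindex)
  also have "\<dots> = (\<Sum>m<k - j. (\<Sum>a\<le>m. ?C a m ** tinv b (m - a))
      + ?X (j + m) ** (\<Sum>a\<le>m. b a ** tinv b (m - a)))"
  proof (rule sum.cong[OF refl])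
    fix m
    have "b a ** ?X (j + m) ** tinv b (m - a)
        = ?C a m ** tinv b (m - a) + ?X (j + m) ** (b a ** tinv b (m - a))" for a
      by (simp add: matrix_diff_rdistrib matrix_mul_assoc)
    then show "(\<Sum>a\<le>m. b a ** ?X (j + m) ** tinv b (m - a)) = (\<Sum>a\<le>m. ?C a m ** tinv b (m - a))
        + ?X (j + m) ** (\<Sum>a\<le>m. b a ** tinv b (m - a))"
      by (simp add: sum.distrib matrix_mult_sum)
  qed
  also have "\<dots> = (\<Sum>m<k - j. \<Sum>a\<le>m. ?C a m ** tinv b (m - a))
      + (\<Sum>m<k - j. ?X (j + m) ** (\<Sum>a\<le>m. b a ** tinv b (m - a)))"
    by (rule sum.distrib)
  also have "(\<Sum>m<k - j. ?X (j + m) ** (\<Sum>a\<le>m. b a ** tinv b (m - a))) = ?X j"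
    using j k_gt_1 by (simp add: tinv_right_inverse[where b=b, OF b0] if_distrib cong: if_cong)
  finally have coad_eq: "coad k b ?X j - ?X j = (\<Sum>m<k - j. \<Sum>a\<le>m. ?C a m ** tinv b (m - a))"
    by simp
  have "support_in (ord_less k ord j) (?C a m ** tinv b (m - a))" if m: "m < k - j" and a: "a \<le> m" for m a
  proof (cases "a = 0")
    case True
    then show ?thesis using b0 by simp
  next
    case False
    define i where "i = j + m"
    have i: "i \<le> k - 1" "a \<le> i - 1" "j \<le> i - 1" "1 \<le> a" "i - 1 \<le> k - 2" "m - a \<le> i - 1"
      using m a False j unfolding i_def by auto
    have "support_in (ord_less k ord (i - 1)) (?C a m)"
      unfolding support_in_def
    proof (intro allI impI)
      fix p q
      assume "?C a m $ p $ q \<noteq> 0"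
      moreover have "?C a m $ p $ q = b a $ p $ q * (?X i $ q $ q - ?X i $ p $ p)"
        by (simp add: matrix_mult_dT_entry dT_matrix_mult_entry algebra_simps i_def)
      ultimately have "b a $ p $ q \<noteq> 0" "?X i $ q $ q \<noteq> ?X i $ p $ p" by auto
      then have "ord a p q" "\<not> same_eig k T (i - 1) p q"
        using P_plus_support[OF b, of a] i dT_diag_eq_if_same_eig[of "i - 1" p q i]
        unfolding support_in_def by auto
      then show "ord_less k ord (i - 1) p q"
        using ord_mono_level ord_preorder_level(3)[of "i - 1" p q] i by (auto simp: ord_less_def)
    qed
    moreover have "support_in (ord (i - 1)) (tinv b (m - a))"
      using tinv_support[OF b, of "m - a"] ord_mono_level[OF i(6) i(5)] i
      by (auto intro: support_in_mono)
    ultimately have "support_in (ord_less k ord (i - 1)) (?C a m ** tinv b (m - a))"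
      by (rule support_in_mult) (rule ord_less_ord_trans)
    then show ?thesis
      using ord_less_antimono_level[OF i(3)] by (rule support_in_mono)
  qed
  then show ?thesis unfolding coad_eq by (auto intro!: support_in_sum)
qed

lemma coad_dT_in_affine_U_minus_dual:
  assumes "b \<in> P_plus k ord"
  shows "coad k b (dT k T) \<in> (\<lambda>U i. dT k T i + U i) ` U_minus_dual k ord"
proof
  let ?U = "\<lambda>i. coad k b (dT k T) i - dT k T i"
  show "coad k b (dT k T) = (\<lambda>i. dT k T i + ?U i)" by simp
  show "?U \<in> U_minus_dual k ord"
    unfolding U_minus_dual_def in_bkdual_def
    using coad_dT_minus_dT_support[OF assms] in_u_plus_if_support by (auto simp: coad_def dT_def)
qed

definition split_level :: "'n \<Rightarrow> 'n \<Rightarrow> nat" where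
  "split_level p q = (LEAST t. \<not> ord_less k ord t p q)"

lemma ord_less_iff_less_split_level: "ord_less k ord t p q \<longleftrightarrow> t < split_level p q"
proof
  have "\<not> k - 1 \<le> k - 2" using k_gt_1 by arith
  then have "\<not> ord_less k ord (k - 1) p q" by (simp add: ord_less_def)
  then have "\<not> ord_less k ord (split_level p q) p q"
    unfolding split_level_def by (rule LeastI)
  then show "ord_less k ord t p q \<Longrightarrow> t < split_level p q"
    using ord_less_antimono_level[of "split_level p q" t p q] by (metis not_le)
  show "t < split_level p q \<Longrightarrow> ord_less k ord t p q"
    unfolding split_level_def using not_less_Least by blast
qed

lemma same_eig_from_split_level:
  assumes "1 \<le> split_level p q" "split_level p q \<le> t" "t \<le> k - 2"
  shows "same_eig k T t p q"
proof -
  let ?D = "split_level p q"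
  have D: "?D \<le> k - 2" using assms by simp
  have below: "ord_less k ord (?D - 1) p q" and at: "\<not> ord_less k ord ?D p q"
    using assms(1) ord_less_iff_less_split_level by auto
  have "\<not> ord_less k ord ?D q p"
    using below ord_less_antimono_level[of "?D - 1" ?D q p] by (auto simp: ord_less_def)
  then have "ord ?D p q" "ord ?D q p"
    using at ord_preorder_level(2)[OF D, of p q] D by (auto simp: ord_less_def)
  then have "same_eig k T ?D p q" using ord_preorder_level(3)[OF D] by blast
  then show ?thesis using assms(2) by (simp add: same_eig_def)
qed

lemma dT_diag_eq_beyond_split_level:
  assumes "1 \<le> split_level p q" "split_level p q < t"
  shows "dT k T t $ p $ p = dT k T t $ q $ q"
proof (cases "t < k")
  case True
  then have "same_eig k T (t - 1) p q" using assms by (intro same_eig_from_split_level) auto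
  then show ?thesis using assms by (intro dT_diag_eq_if_same_eig[of "t - 1"]) auto
qed (simp add: dT_entry)

text \<open>The choice of the split level is what makes the diagonal of the linear system below
  invertible: \<open>T\<^sub>D\<close> is the first of \<open>T\<^sub>k\<^sub>-\<^sub>1, T\<^sub>k\<^sub>-\<^sub>2, \<dots>\<close> to distinguish \<open>p\<close> from \<open>q\<close>.\<close>
lemma dT_split_level_separates:
  assumes "1 \<le> split_level p q"
  shows "dT k T (split_level p q) $ p $ p \<noteq> dT k T (split_level p q) $ q $ q"
proof -
  let ?D = "split_level p q"
  have "ord_less k ord (?D - 1) p q" using assms ord_less_iff_less_split_level by simp
  then have "\<not> same_eig k T (?D - 1) p q"
    using ord_preorder_level(3)[of "?D - 1" p q] by (auto simp: ord_less_def)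
  then obtain t where t: "?D - 1 < t" "t < k" "T t $ p $ p \<noteq> T t $ q $ q"
    unfolding same_eig_def by blast
  have "t = ?D"
  proof (rule ccontr)
    assume "t \<noteq> ?D"
    then have "same_eig k T ?D p q" using same_eig_from_split_level[of p q ?D] assms t by simp
    then show False using t \<open>t \<noteq> ?D\<close> by (simp add: same_eig_def)
  qed
  then show ?thesis using t assms by (simp add: dT_entry)
qed

lemma U_minus_dual_support:
  assumes "U \<in> U_minus_dual k ord"
  shows "support_in (ord_less k ord t) (U t)"
proof -
  have u: "\<And>i. 1 \<le> i \<Longrightarrow> i \<le> k - 1 \<Longrightarrow> in_u_plus k ord i (U i)"
    and "U 0 = 0" "\<And>i. k \<le> i \<Longrightarrow> U i = 0"
    using assms unfolding U_minus_dual_def in_bkdual_def by auto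
  moreover have "support_in (ord_less k ord t) (U t)" if "1 \<le> t" "t \<le> k - 1"
    using u[OF that] by (auto simp: in_u_plus_def support_in_def ord_less_def split: if_splits)
  ultimately show ?thesis
    by (cases "t = 0 \<or> k \<le> t") (auto simp: not_le)
qed

lemma U_minus_dual_diag: "U \<in> U_minus_dual k ord \<Longrightarrow> U t $ p $ p = 0"
  using U_minus_dual_support[of U t] ord_less_irrefl[of k ord t p] unfolding support_in_def by blast

lemma card_ord_less_successors_less:
  assumes "ord_less k ord 0 p p'"
  shows "card {r. ord_less k ord 0 p' r} < card {r. ord_less k ord 0 p r}"
proof (rule psubset_card_mono)
  have "ord 0 p p'" using assms by (simp add: ord_less_def)
  then have "{r. ord_less k ord 0 p' r} \<subseteq> {r. ord_less k ord 0 p r}"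
    using ord_ord_less_trans by blast
  moreover have "p' \<in> {r. ord_less k ord 0 p r} - {r. ord_less k ord 0 p' r}"
    using assms ord_less_irrefl by simp
  ultimately show "{r. ord_less k ord 0 p' r} \<subset> {r. ord_less k ord 0 p r}" by blast
qed simp

text \<open>The \<open>(p, q)\<close>-entry of the degree-\<open>j\<close> part of \<open>b dT = (dT + U) b\<close>, after cancelling the
  terms of \<open>b\<^sub>0 = 1\<close>; \<open>dT\<close> is diagonal, so only the entry \<open>(b\<^sub>a)\<^sub>p\<^sub>q\<close> meets it.\<close>
definition intertwining_entry_eq :: "(nat \<Rightarrow> 'n cmat) \<Rightarrow> (nat \<Rightarrow> 'n cmat) \<Rightarrow> nat \<Rightarrow> 'n \<Rightarrow> 'n \<Rightarrow> bool" where
  "intertwining_entry_eq b U j p q \<longleftrightarrow>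
     (\<Sum>a\<in>{1..<k}. b a $ p $ q * (dT k T (j + a) $ q $ q - dT k T (j + a) $ p $ p))
       = U j $ p $ q + (\<Sum>a\<in>{1..<k}. (U (j + a) ** b a) $ p $ q)"

lemma intertwining_entry_eq_outside_support:
  assumes b: "\<And>a. 1 \<le> a \<Longrightarrow> support_in (ord_less k ord a) (b a)"
    and U: "U \<in> U_minus_dual k ord" and not_less: "\<not> ord_less k ord j p q"
  shows "intertwining_entry_eq b U j p q"
proof -
  have lhs: "(\<Sum>a\<in>{1..<k}. b a $ p $ q * (dT k T (j + a) $ q $ q - dT k T (j + a) $ p $ p)) = 0"
  proof (rule sum.neutral, rule ballI)
    fix a assume a: "a \<in> {1..<k}"
    show "b a $ p $ q * (dT k T (j + a) $ q $ q - dT k T (j + a) $ p $ p) = 0"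
    proof (cases "b a $ p $ q = 0")
    case False
      then have "a < split_level p q"
        using b[of a] a ord_less_iff_less_split_level by (simp add: support_in_def)
      moreover have "split_level p q \<le> j"
        using not_less ord_less_iff_less_split_level by simp
      ultimately show ?thesis using dT_diag_eq_beyond_split_level[of p q "j + a"] a by simp
    qed simp
  qed
  have Ub_support: "support_in (ord_less k ord j) (U (j + a) ** b a)" if a: "a \<in> {1..<k}" for a
  proof (rule support_in_mult[OF U_minus_dual_support[OF U] b])
    show "1 \<le> a" using a by simp
    show "ord_less k ord j x y" if "ord_less k ord (j + a) x r" "ord_less k ord a r y" for x r y
    proof -
      have "ord (j + a) r y"
        using that ord_mono_level[of a "j + a" r y] by (simp add: ord_less_def)
      then have "ord_less k ord (j + a) x y" using that(1) ord_less_ord_trans by blast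
      then show ?thesis using ord_less_antimono_level[of j "j + a"] by simp
    qed
  qed
  have "(U (j + a) ** b a) $ p $ q = 0" if "a \<in> {1..<k}" for a
    using Ub_support[OF that] not_less by (auto simp: support_in_def)
  then have "(\<Sum>a\<in>{1..<k}. (U (j + a) ** b a) $ p $ q) = 0"
    by (intro sum.neutral) blast
  moreover have "U j $ p $ q = 0"
    using U_minus_dual_support[OF U, of j] not_less by (auto simp: support_in_def)
  ultimately show ?thesis using lhs by (simp add: intertwining_entry_eq_def)
qed

lemma coad_dT_eq_if_entry_eqs:
  assumes b0: "b 0 = mat 1" and b: "\<And>a. 1 \<le> a \<Longrightarrow> support_in (ord_less k ord a) (b a)"
    and U: "U \<in> U_minus_dual k ord"
    and eqs: "\<And>j p q. 1 \<le> j \<Longrightarrow> ord_less k ord j p q \<Longrightarrow> intertwining_entry_eq b U j p q"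
  shows "coad k b (dT k T) = (\<lambda>i. dT k T i + U i)"
proof (rule coad_eq_if_intertwines[where b=b, OF b0])
  let ?X = "dT k T"
  have U0: "U 0 = 0" "\<And>i. i \<ge> k \<Longrightarrow> U i = 0"
    using U unfolding U_minus_dual_def in_bkdual_def by auto
  then show "\<And>i. k \<le> i \<Longrightarrow> ?X i = 0" "\<And>i. k \<le> i \<Longrightarrow> ?X i + U i = 0" "?X 0 + U 0 = 0"
    by (simp_all add: dT_def)
  fix j :: nat
  assume j: "1 \<le> j"
  show "(\<Sum>a<k. b a ** ?X (j + a)) = (\<Sum>a<k. (?X (j + a) + U (j + a)) ** b a)"
  proof (intro iffD2[OF vec_eq_iff] allI)
    fix p q
    have "intertwining_entry_eq b U j p q"
      using eqs[OF j] intertwining_entry_eq_outside_support[OF b U] by blast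
    moreover have "{..<k} = insert 0 {1..<k}" using k_gt_1 by auto
    moreover have "(mat 1 :: 'n cmat) $ p $ q * (?X j $ q $ q - ?X j $ p $ p) = 0"
      by (cases "p = q") (simp_all add: mat_def)
    ultimately have "(\<Sum>a<k. b a $ p $ q * (?X (j + a) $ q $ q - ?X (j + a) $ p $ p))
        = (\<Sum>a<k. (U (j + a) ** b a) $ p $ q)"
      by (simp add: intertwining_entry_eq_def b0)
    then show "(\<Sum>a<k. b a ** ?X (j + a)) $ p $ q = (\<Sum>a<k. (?X (j + a) + U (j + a)) ** b a) $ p $ q"
      by (simp add: matrix_mult_dT_entry dT_matrix_mult_entry matrix_add_rdistrib sum.distrib
          algebra_simps sum_subtractf)
  qed
qed

lemma P_plus_if_support:
  assumes "b 0 = mat 1" and b: "\<And>a. 1 \<le> a \<Longrightarrow> support_in (ord_less k ord a) (b a)"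
  shows "b \<in> P_plus k ord"
proof -
  have "b a = 0" if "a \<ge> k" for a
  proof -
    have "\<not> a \<le> k - 2" using that k_gt_1 by linarith
    then show ?thesis
      using b[of a] that k_gt_1 by (auto simp: support_in_def ord_less_def vec_eq_iff)
  qed
  moreover have "in_p_plus k ord a (b a)" if "1 \<le> a" for a
    using b[OF that] by (auto simp: in_p_plus_def support_in_def ord_less_def)
  ultimately show ?thesis using assms(1) by (auto simp: P_plus_def in_Bk_def)
qed

text \<open>For a fixed column \<open>q\<close>, the unknown \<open>(a, p)\<close> stands for \<open>(b\<^sub>a)\<^sub>p\<^sub>q\<close>, and the equation indexed by
  \<open>(a, p)\<close> is \<open>intertwining_entry_eq b U (split_level p q - a) p q\<close>, the one whose diagonal
  coefficient involves \<open>T\<^bsub>split_level p q\<^esub>\<close>.\<close>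
definition column_unknowns :: "'n \<Rightarrow> (nat \<times> 'n) set" where
  "column_unknowns q = {(a, p). 1 \<le> a \<and> ord_less k ord a p q}"

definition system_coeff :: "(nat \<Rightarrow> 'n cmat) \<Rightarrow> 'n \<Rightarrow> nat \<times> 'n \<Rightarrow> nat \<times> 'n \<Rightarrow> complex" where
  "system_coeff U q = (\<lambda>(a, p) (a', r).
     (if r = p then dT k T (split_level p q - a + a') $ q $ q - dT k T (split_level p q - a + a') $ p $ p
      else 0) - U (split_level p q - a + a') $ p $ r)"

text \<open>Triangularity is lexicographic: first in the position of the block of \<open>p\<close> at level \<open>0\<close>,
  then in the degree \<open>a\<close>.\<close>
definition unknown_rank :: "nat \<times> 'n \<Rightarrow> nat" where
  "unknown_rank = (\<lambda>(a, p). card {r. ord_less k ord 0 p r} * k + a)"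

lemma finite_column_unknowns: "finite (column_unknowns q)"
  by (rule finite_subset[of _ "{..k} \<times> UNIV"]) (auto simp: column_unknowns_def ord_less_def)

lemma system_coeff_diag:
  assumes U: "U \<in> U_minus_dual k ord" and i: "(a, p) \<in> column_unknowns q"
  shows "system_coeff U q (a, p) (a, p) \<noteq> 0"
proof -
  have "a < split_level p q"
    using i ord_less_iff_less_split_level by (simp add: column_unknowns_def)
  moreover have "U (split_level p q) $ p $ p = 0"
    using U_minus_dual_diag[OF U] .
  ultimately show ?thesis
    using dT_split_level_separates[of p q] by (simp add: system_coeff_def)
qed

lemma system_coeff_triangular:
  assumes U: "U \<in> U_minus_dual k ord"
    and i: "(a, p) \<in> column_unknowns q" and i': "(a', r) \<in> column_unknowns q"
    and ne: "(a', r) \<noteq> (a, p)" and coeff: "system_coeff U q (a, p) (a', r) \<noteq> 0"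
  shows "unknown_rank (a', r) < unknown_rank (a, p)"
proof -
  let ?t = "split_level p q - a + a'"
  have a: "a < split_level p q" using i ord_less_iff_less_split_level by (simp add: column_unknowns_def)
  have "a' \<le> k - 2" using i' by (simp add: column_unknowns_def ord_less_def)
  then have a'_k: "a' < k" using k_gt_1 by linarith
  show ?thesis
  proof (cases "r = p")
    case True
    have "U ?t $ p $ p = 0" using U_minus_dual_diag[OF U] .
    then have "dT k T ?t $ p $ p \<noteq> dT k T ?t $ q $ q" using coeff True by (simp add: system_coeff_def)
    have "a' < a"
    proof (rule ccontr)
      assume "\<not> a' < a"
      then have "split_level p q < ?t" using ne True a by auto
      then show False using dT_diag_eq_beyond_split_level[of p q ?t] a \<open>dT k T ?t $ p $ p \<noteq> _\<close> by simp
    qed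
    then show ?thesis using True by (simp add: unknown_rank_def)
  next
    case False
    then have "U ?t $ p $ r \<noteq> 0" using coeff by (simp add: system_coeff_def)
    then have "ord_less k ord 0 p r"
      using U_minus_dual_support[OF U, of ?t] ord_less_antimono_level[of 0 ?t]
      by (simp add: support_in_def)
    then have "card {x. ord_less k ord 0 r x} + 1 \<le> card {x. ord_less k ord 0 p x}"
      using card_ord_less_successors_less by fastforce
    then have "(card {x. ord_less k ord 0 r x} + 1) * k \<le> card {x. ord_less k ord 0 p x} * k"
      by (rule mult_le_mono1)
    then show ?thesis using a'_k by (simp add: unknown_rank_def)
  qed
qed

lemma intertwining_entry_eq_if_column_solution:
  assumes b: "\<And>a p. 1 \<le> a \<Longrightarrow> b a $ p $ q = (if (a, p) \<in> column_unknowns q then v (a, p) else 0)"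
    and v: "\<And>a p. (a, p) \<in> column_unknowns q \<Longrightarrow>
      (\<Sum>i'\<in>column_unknowns q. system_coeff U q (a, p) i' * v i') = U (split_level p q - a) $ p $ q"
    and j: "1 \<le> j" and less: "ord_less k ord j p q"
  shows "intertwining_entry_eq b U j p q"
proof -
  let ?I = "column_unknowns q"
  let ?d = "\<lambda>a. dT k T (j + a) $ q $ q - dT k T (j + a) $ p $ p"
  define a0 where "a0 = split_level p q - j"
  have j_less: "j < split_level p q" using less ord_less_iff_less_split_level by simp
  then have a0: "(a0, p) \<in> ?I" and j_eq: "split_level p q - a0 = j"
    using j ord_less_iff_less_split_level by (auto simp: column_unknowns_def a0_def)
  have as_double_sum: "(\<Sum>i\<in>?I. (case i of (a, r) \<Rightarrow> f a r) * v i)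
      = (\<Sum>a\<in>{1..<k}. \<Sum>r\<in>UNIV. f a r * b a $ r $ q)" for f
  proof -
    have "(\<Sum>a\<in>{1..<k}. \<Sum>r\<in>UNIV. f a r * b a $ r $ q) = (\<Sum>(a, r)\<in>{1..<k} \<times> UNIV. f a r * b a $ r $ q)"
      by (simp add: sum.cartesian_product)
    also have "\<dots> = (\<Sum>(a, r)\<in>?I. f a r * b a $ r $ q)"
    proof (rule sum.mono_neutral_right)
      show "?I \<subseteq> {1..<k} \<times> UNIV" by (auto simp: column_unknowns_def ord_less_def)
      show "\<forall>i\<in>{1..<k} \<times> UNIV - ?I. (case i of (a, r) \<Rightarrow> f a r * b a $ r $ q) = 0"
        using b by auto
    qed simp
    also have "\<dots> = (\<Sum>i\<in>?I. (case i of (a, r) \<Rightarrow> f a r) * v i)"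
      by (rule sum.cong) (auto simp: b column_unknowns_def)
    finally show ?thesis by simp
  qed
  have "U j $ p $ q = (\<Sum>i'\<in>?I. system_coeff U q (a0, p) i' * v i')"
    using v[OF a0] j_eq by simp
  also have "\<dots> = (\<Sum>i'\<in>?I. (case i' of (a, r) \<Rightarrow> (if r = p then ?d a else 0) - U (j + a) $ p $ r) * v i')"
  proof (rule sum.cong)
    have shift: "split_level p q - a0 + a = j + a" for a using j_eq by simp
    show "system_coeff U q (a0, p) i' * v i'
        = (case i' of (a, r) \<Rightarrow> (if r = p then ?d a else 0) - U (j + a) $ p $ r) * v i'" for i'
      by (cases i') (simp add: system_coeff_def shift)
  qed simp
  also have "\<dots> = (\<Sum>a\<in>{1..<k}. \<Sum>r\<in>UNIV. ((if r = p then ?d a else 0) - U (j + a) $ p $ r) * b a $ r $ q)"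
    by (rule as_double_sum)
  also have "\<dots> = (\<Sum>a\<in>{1..<k}. b a $ p $ q * ?d a - (U (j + a) ** b a) $ p $ q)"
  proof (rule sum.cong[OF refl])
    fix a
    have "(\<Sum>r\<in>UNIV. ((if r = p then ?d a else 0) - U (j + a) $ p $ r) * b a $ r $ q)
        = (\<Sum>r\<in>UNIV. (if r = p then ?d a * b a $ r $ q else 0)) - (\<Sum>r\<in>UNIV. U (j + a) $ p $ r * b a $ r $ q)"
      by (simp add: left_diff_distrib sum_subtractf if_distrib[of "\<lambda>x. x * _"] cong: if_cong)
    then show "(\<Sum>r\<in>UNIV. ((if r = p then ?d a else 0) - U (j + a) $ p $ r) * b a $ r $ q)
        = b a $ p $ q * ?d a - (U (j + a) ** b a) $ p $ q"
      by (simp add: matrix_matrix_mult_def mult.commute)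
  qed
  finally show ?thesis by (simp add: intertwining_entry_eq_def sum_subtractf)
qed

lemma intertwining_entry_eqs_solvable:
  assumes U: "U \<in> U_minus_dual k ord"
  shows "\<exists>b. b 0 = mat 1 \<and> (\<forall>a\<ge>1. support_in (ord_less k ord a) (b a)) \<and>
    (\<forall>j p q. 1 \<le> j \<longrightarrow> ord_less k ord j p q \<longrightarrow> intertwining_entry_eq b U j p q)"
proof -
  have "\<exists>v. \<forall>i\<in>column_unknowns q. (\<Sum>i'\<in>column_unknowns q. system_coeff U q i i' * v i')
      = (case i of (a, p) \<Rightarrow> U (split_level p q - a) $ p $ q)" for q
  proof (rule triangular_system_solvable[OF finite_column_unknowns])
    show "system_coeff U q i i \<noteq> 0" if "i \<in> column_unknowns q" for i
      using that system_coeff_diag[OF U] by (cases i) simp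
    show "unknown_rank i' < unknown_rank i"
      if "i \<in> column_unknowns q" "i' \<in> column_unknowns q" "i' \<noteq> i" "system_coeff U q i i' \<noteq> 0" for i i'
      using that system_coeff_triangular[OF U] by (cases i, cases i') simp
  qed
  then obtain v where "\<forall>q. \<forall>i\<in>column_unknowns q. (\<Sum>i'\<in>column_unknowns q. system_coeff U q i i' * v q i')
      = (case i of (a, p) \<Rightarrow> U (split_level p q - a) $ p $ q)"
    using choice[of "\<lambda>q v. \<forall>i\<in>column_unknowns q. (\<Sum>i'\<in>column_unknowns q. system_coeff U q i i' * v i')
      = (case i of (a, p) \<Rightarrow> U (split_level p q - a) $ p $ q)"] by blast
  then have v: "\<And>q a p. (a, p) \<in> column_unknowns q \<Longrightarrow>
      (\<Sum>i'\<in>column_unknowns q. system_coeff U q (a, p) i' * v q i') = U (split_level p q - a) $ p $ q"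
    by fastforce
  define b where "b a = (if a = 0 then mat 1
    else (\<chi> p q. if (a, p) \<in> column_unknowns q then v q (a, p) else 0))" for a
  have b: "b a $ p $ q = (if (a, p) \<in> column_unknowns q then v q (a, p) else 0)" if "1 \<le> a" for a p q
    using that by (simp add: b_def)
  show ?thesis
  proof (intro exI conjI allI impI)
    show "b 0 = mat 1" by (simp add: b_def)
    show "support_in (ord_less k ord a) (b a)" if "1 \<le> a" for a
      using b[OF that] by (auto simp: support_in_def column_unknowns_def)
    show "intertwining_entry_eq b U j p q" if "1 \<le> j" "ord_less k ord j p q" for j p q
      using intertwining_entry_eq_if_column_solution[OF b v] that by blast
  qed
qed

lemma affine_U_minus_dual_in_coad_orbit:
  assumes U: "U \<in> U_minus_dual k ord"
  shows "(\<lambda>i. dT k T i + U i) \<in> (\<lambda>b. coad k b (dT k T)) ` P_plus k ord"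
proof -
  obtain b where b0: "b 0 = mat 1" and b: "\<And>a. 1 \<le> a \<Longrightarrow> support_in (ord_less k ord a) (b a)"
    and eqs: "\<And>j p q. 1 \<le> j \<Longrightarrow> ord_less k ord j p q \<Longrightarrow> intertwining_entry_eq b U j p q"
    using intertwining_entry_eqs_solvable[OF U] by blast
  have "coad k b (dT k T) = (\<lambda>i. dT k T i + U i)"
    using coad_dT_eq_if_entry_eqs[OF b0 b U eqs] .
  moreover have "b \<in> P_plus k ord" using b0 b by (rule P_plus_if_support)
  ultimately show ?thesis by (metis image_eqI)
qed

end

theorem lemma3p8:
  fixes k :: nat and T :: "nat \<Rightarrow> 'n::finite cmat"
    and ord :: "nat \<Rightarrow> 'n \<Rightarrow> 'n \<Rightarrow> bool"
  assumes "k > 1"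
    and "\<forall>i. 1 \<le> i \<and> i \<le> k - 1 \<longrightarrow> diag_mat (T i)"
    and "T (k - 1) \<noteq> 0"
    and "admissible_orders k T ord"
  shows "(\<lambda>b. coad k b (dT k T)) ` P_plus k ord = (\<lambda>U i. dT k T i + U i) ` U_minus_dual k ord"
  using coad_dT_in_affine_U_minus_dual[OF assms(1,2,4)]
    affine_U_minus_dual_in_coad_orbit[OF assms(1,2,4)] by blast

end
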